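(* Let $\mathcal T$ be a pre-triangulated category. Then $\mathrm{fpc}(\mathcal T)\le cx(\mathcal T)$.
   Context: $\Bbbk$ is an algebraically closed field and $\mathcal T$ is $\Bbbk$-linear with suspension $\Sigma$. For a real number $d$, ${}_d\mathcal T=\{X\in\mathcal T:\lim_{n\to\infty}\dim_\Bbbk\mathrm{Hom}_{\mathcal T}(X,\Sigma^nY)/n^{d-1}=0\text{ for all }Y\in\mathcal T\}$, and $cx(\mathcal T)=\inf\{d:{}_d\mathcal T=\mathcal T\}$. An atomic object is $M$ with $\mathrm{Hom}(M,M)=\Bbbk$ and $\mathrm{Hom}(M,\Sigma^{-i}M)=0$ for $i>0$; an atomic set is a finite set $\phi=\{X_1,\dots,X_m\}$ of nonzero atomic objects with $\dim\mathrm{Hom}(X_i,X_j)=\delta_{ij}$. With $A(\phi,\Sigma^n)=(\dim\mathrm{Hom}(X_i,\Sigma^nX_j))_{i,j}$ and $\rho$ the spectral radius (entries $\pm\infty$ replaced by real variables $\pm x_{ij}$ with $\liminf$ as all $x_{ij}\to\infty$), $\mathrm{fpg}(\Sigma)=\sup_\phi\limsup_{n\to\infty}\log_n\rho(A(\phi,\Sigma^n))$ over atomic sets ($\log_n0=-\infty$), and $\mathrm{fpc}(\mathcal T)=\mathrm{fpg}(\Sigma)+1$. *)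

theory Defs
  imports "Jordan_Normal_Form.Spectral_Radius" "HOL-Library.Extended_Real"
    "HOL-Computational_Algebra.Polynomial"
begin

text \<open>Objects of type 'o, morphisms of type 'm, scalars of type 'k.
  cmp g f is the composite g after f; zer X Y is the zero morphism X to Y;
  Sob / Smor is the suspension on objects / morphisms;
  Tri is the class of distinguished triangles (X, Y, Z, u, v, w)
  with u : X to Y, v : Y to Z, w : Z to Sigma X.\<close>

record ('o, 'm, 'k) kcat =
  Ob   :: "'o set"
  Hom  :: "'o \<Rightarrow> 'o \<Rightarrow> 'm set"
  cmp  :: "'m \<Rightarrow> 'm \<Rightarrow> 'm"
  idm  :: "'o \<Rightarrow> 'm"
  zer  :: "'o \<Rightarrow> 'o \<Rightarrow> 'm"
  pls  :: "'m \<Rightarrow> 'm \<Rightarrow> 'm"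
  scl  :: "'k \<Rightarrow> 'm \<Rightarrow> 'm"
  Sob  :: "'o \<Rightarrow> 'o"
  Smor :: "'m \<Rightarrow> 'm"
  Tri  :: "('o \<times> 'o \<times> 'o \<times> 'm \<times> 'm \<times> 'm) set"

definition alg_closed :: "'k::field itself \<Rightarrow> bool" where
  "alg_closed _ \<longleftrightarrow> (\<forall>p :: 'k poly. degree p > 0 \<longrightarrow> (\<exists>x. poly p x = 0))"

definition is_category :: "('o, 'm, 'k) kcat \<Rightarrow> bool" where
  "is_category C \<longleftrightarrow>
     (\<forall>X Y X' Y'. (X, Y) \<noteq> (X', Y') \<longrightarrow> Hom C X Y \<inter> Hom C X' Y' = {}) \<and>
     (\<forall>X\<in>Ob C. \<forall>Y\<in>Ob C. \<forall>Z\<in>Ob C. \<forall>f\<in>Hom C X Y. \<forall>g\<in>Hom C Y Z. cmp C g f \<in> Hom C X Z) \<and>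
     (\<forall>X\<in>Ob C. \<forall>Y\<in>Ob C. \<forall>Z\<in>Ob C. \<forall>W\<in>Ob C. \<forall>f\<in>Hom C X Y. \<forall>g\<in>Hom C Y Z. \<forall>h\<in>Hom C Z W.
        cmp C h (cmp C g f) = cmp C (cmp C h g) f) \<and>
     (\<forall>X\<in>Ob C. idm C X \<in> Hom C X X) \<and>
     (\<forall>X\<in>Ob C. \<forall>Y\<in>Ob C. \<forall>f\<in>Hom C X Y. cmp C f (idm C X) = f \<and> cmp C (idm C Y) f = f)"

definition is_klinear :: "('o, 'm, 'k::field) kcat \<Rightarrow> bool" where
  "is_klinear C \<longleftrightarrow> is_category C \<and>
     (\<forall>X\<in>Ob C. \<forall>Y\<in>Ob C.
        zer C X Y \<in> Hom C X Y \<and>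
        (\<forall>f\<in>Hom C X Y. \<forall>g\<in>Hom C X Y. pls C f g \<in> Hom C X Y) \<and>
        (\<forall>a. \<forall>f\<in>Hom C X Y. scl C a f \<in> Hom C X Y) \<and>
        (\<forall>f\<in>Hom C X Y. \<forall>g\<in>Hom C X Y. \<forall>h\<in>Hom C X Y. pls C (pls C f g) h = pls C f (pls C g h)) \<and>
        (\<forall>f\<in>Hom C X Y. \<forall>g\<in>Hom C X Y. pls C f g = pls C g f) \<and>
        (\<forall>f\<in>Hom C X Y. pls C f (zer C X Y) = f) \<and>
        (\<forall>f\<in>Hom C X Y. pls C f (scl C (-1) f) = zer C X Y) \<and>
        (\<forall>a b. \<forall>f\<in>Hom C X Y. scl C a (scl C b f) = scl C (a * b) f) \<and>
        (\<forall>f\<in>Hom C X Y. scl C 1 f = f) \<and>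
        (\<forall>a b. \<forall>f\<in>Hom C X Y. scl C (a + b) f = pls C (scl C a f) (scl C b f)) \<and>
        (\<forall>a. \<forall>f\<in>Hom C X Y. \<forall>g\<in>Hom C X Y. scl C a (pls C f g) = pls C (scl C a f) (scl C a g))) \<and>
     (\<forall>X\<in>Ob C. \<forall>Y\<in>Ob C. \<forall>Z\<in>Ob C. \<forall>a.
        (\<forall>f\<in>Hom C X Y. \<forall>f'\<in>Hom C X Y. \<forall>g\<in>Hom C Y Z.
           cmp C g (pls C f f') = pls C (cmp C g f) (cmp C g f') \<and>
           cmp C g (scl C a f) = scl C a (cmp C g f)) \<and>
        (\<forall>f\<in>Hom C X Y. \<forall>g\<in>Hom C Y Z. \<forall>g'\<in>Hom C Y Z.
           cmp C (pls C g g') f = pls C (cmp C g f) (cmp C g' f) \<and>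
           cmp C (scl C a g) f = scl C a (cmp C g f)))"

definition zero_obj :: "('o, 'm, 'k) kcat \<Rightarrow> 'o \<Rightarrow> bool" where
  "zero_obj C Z \<longleftrightarrow> Z \<in> Ob C \<and> Hom C Z Z = {idm C Z} \<and> idm C Z = zer C Z Z"

definition is_additive :: "('o, 'm, 'k::field) kcat \<Rightarrow> bool" where
  "is_additive C \<longleftrightarrow> is_klinear C \<and> (\<exists>Z. zero_obj C Z) \<and>
     (\<forall>X\<in>Ob C. \<forall>Y\<in>Ob C. \<exists>B\<in>Ob C. \<exists>i1\<in>Hom C X B. \<exists>i2\<in>Hom C Y B. \<exists>p1\<in>Hom C B X. \<exists>p2\<in>Hom C B Y.
        cmp C p1 i1 = idm C X \<and> cmp C p2 i2 = idm C Y \<and>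
        cmp C p1 i2 = zer C Y X \<and> cmp C p2 i1 = zer C X Y \<and>
        pls C (cmp C i1 p1) (cmp C i2 p2) = idm C B)"

definition is_iso :: "('o, 'm, 'k) kcat \<Rightarrow> 'o \<Rightarrow> 'o \<Rightarrow> 'm \<Rightarrow> bool" where
  "is_iso C X Y f \<longleftrightarrow> f \<in> Hom C X Y \<and>
     (\<exists>g\<in>Hom C Y X. cmp C g f = idm C X \<and> cmp C f g = idm C Y)"

definition is_suspension :: "('o, 'm, 'k::field) kcat \<Rightarrow> bool" where
  "is_suspension C \<longleftrightarrow>
     bij_betw (Sob C) (Ob C) (Ob C) \<and>
     (\<forall>X\<in>Ob C. \<forall>Y\<in>Ob C. bij_betw (Smor C) (Hom C X Y) (Hom C (Sob C X) (Sob C Y))) \<and>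
     (\<forall>X\<in>Ob C. Smor C (idm C X) = idm C (Sob C X)) \<and>
     (\<forall>X\<in>Ob C. \<forall>Y\<in>Ob C. \<forall>Z\<in>Ob C. \<forall>f\<in>Hom C X Y. \<forall>g\<in>Hom C Y Z.
        Smor C (cmp C g f) = cmp C (Smor C g) (Smor C f)) \<and>
     (\<forall>X\<in>Ob C. \<forall>Y\<in>Ob C. \<forall>a. \<forall>f\<in>Hom C X Y. \<forall>g\<in>Hom C X Y.
        Smor C (pls C f g) = pls C (Smor C f) (Smor C g) \<and>
        Smor C (scl C a f) = scl C a (Smor C f))"

definition is_triangle :: "('o, 'm, 'k) kcat \<Rightarrow> 'o \<times> 'o \<times> 'o \<times> 'm \<times> 'm \<times> 'm \<Rightarrow> bool" where
  "is_triangle C T \<longleftrightarrow> (case T of (X, Y, Z, u, v, w) \<Rightarrow>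
     X \<in> Ob C \<and> Y \<in> Ob C \<and> Z \<in> Ob C \<and>
     u \<in> Hom C X Y \<and> v \<in> Hom C Y Z \<and> w \<in> Hom C Z (Sob C X))"

definition pretriangulated :: "('o, 'm, 'k::field) kcat \<Rightarrow> bool" where
  "pretriangulated C \<longleftrightarrow> is_additive C \<and> is_suspension C \<and>
     (\<forall>T\<in>Tri C. is_triangle C T) \<and>
     \<comment> \<open>TR1 (a): closed under isomorphisms of triangles\<close>
     (\<forall>X Y Z u v w X' Y' Z' u' v' w' a b c.
        (X, Y, Z, u, v, w) \<in> Tri C \<and> is_triangle C (X', Y', Z', u', v', w') \<and>
        is_iso C X X' a \<and> is_iso C Y Y' b \<and> is_iso C Z Z' c \<and>
        cmp C b u = cmp C u' a \<and> cmp C c v = cmp C v' b \<and>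
        cmp C (Smor C a) w = cmp C w' c
        \<longrightarrow> (X', Y', Z', u', v', w') \<in> Tri C) \<and>
     \<comment> \<open>TR1 (b): X to X to 0 to Sigma X is distinguished\<close>
     (\<forall>X\<in>Ob C. \<forall>Z. zero_obj C Z \<longrightarrow>
        (X, X, Z, idm C X, zer C X Z, zer C Z (Sob C X)) \<in> Tri C) \<and>
     \<comment> \<open>TR1 (c): every morphism extends to a distinguished triangle\<close>
     (\<forall>X\<in>Ob C. \<forall>Y\<in>Ob C. \<forall>u\<in>Hom C X Y. \<exists>Z v w. (X, Y, Z, u, v, w) \<in> Tri C) \<and>
     \<comment> \<open>TR2: rotation\<close>
     (\<forall>X Y Z u v w. is_triangle C (X, Y, Z, u, v, w) \<longrightarrow>
        ((X, Y, Z, u, v, w) \<in> Tri C \<longleftrightarrow>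
         (Y, Z, Sob C X, v, w, scl C (-1) (Smor C u)) \<in> Tri C)) \<and>
     \<comment> \<open>TR3: morphism completion\<close>
     (\<forall>X Y Z u v w X' Y' Z' u' v' w' f g.
        (X, Y, Z, u, v, w) \<in> Tri C \<and> (X', Y', Z', u', v', w') \<in> Tri C \<and>
        f \<in> Hom C X X' \<and> g \<in> Hom C Y Y' \<and> cmp C g u = cmp C u' f
        \<longrightarrow> (\<exists>h\<in>Hom C Z Z'. cmp C h v = cmp C v' g \<and> cmp C (Smor C f) w = cmp C w' h))"

fun lcomb :: "('o, 'm, 'k) kcat \<Rightarrow> 'o \<Rightarrow> 'o \<Rightarrow> ('m \<Rightarrow> 'k) \<Rightarrow> 'm list \<Rightarrow> 'm" where
  "lcomb C X Y c [] = zer C X Y"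
| "lcomb C X Y c (f # fs) = pls C (scl C (c f) f) (lcomb C X Y c fs)"

definition lin_indep :: "('o, 'm, 'k::field) kcat \<Rightarrow> 'o \<Rightarrow> 'o \<Rightarrow> 'm list \<Rightarrow> bool" where
  "lin_indep C X Y fs \<longleftrightarrow> distinct fs \<and> set fs \<subseteq> Hom C X Y \<and>
     (\<forall>c. lcomb C X Y c fs = zer C X Y \<longrightarrow> (\<forall>f\<in>set fs. c f = 0))"

definition hdim :: "('o, 'm, 'k::field) kcat \<Rightarrow> 'o \<Rightarrow> 'o \<Rightarrow> enat" where
  "hdim C X Y = (SUP fs \<in> {fs. lin_indep C X Y fs}. enat (length fs))"

section \<open>Complexity\<close>

definition in_dT :: "('o, 'm, 'k::field) kcat \<Rightarrow> real \<Rightarrow> 'o \<Rightarrow> bool" where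
  "in_dT C d X \<longleftrightarrow> (\<forall>Y\<in>Ob C.
     ((\<lambda>n::nat. ereal_of_enat (hdim C X ((Sob C ^^ n) Y)) / ereal (real n powr (d - 1)))
        \<longlongrightarrow> 0) sequentially)"

definition cx :: "('o, 'm, 'k::field) kcat \<Rightarrow> ereal" where
  "cx C = Inf {ereal d | d. \<forall>X\<in>Ob C. in_dT C d X}"

section \<open>Frobenius-Perron complexity\<close>

definition Sinv :: "('o, 'm, 'k) kcat \<Rightarrow> 'o \<Rightarrow> 'o" where
  "Sinv C = inv_into (Ob C) (Sob C)"

definition atomic :: "('o, 'm, 'k::field) kcat \<Rightarrow> 'o \<Rightarrow> bool" where
  "atomic C M \<longleftrightarrow> M \<in> Ob C \<and> hdim C M M = 1 \<and>
     (\<forall>i::nat. i > 0 \<longrightarrow> hdim C M ((Sinv C ^^ i) M) = 0)"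

definition atomic_set :: "('o, 'm, 'k::field) kcat \<Rightarrow> 'o list \<Rightarrow> bool" where
  "atomic_set C xs \<longleftrightarrow> xs \<noteq> [] \<and> distinct xs \<and>
     (\<forall>X\<in>set xs. atomic C X \<and> idm C X \<noteq> zer C X X) \<and>
     (\<forall>i<length xs. \<forall>j<length xs. hdim C (xs ! i) (xs ! j) = (if i = j then 1 else 0))"

definition all_to_infty :: "(nat \<Rightarrow> nat \<Rightarrow> real) filter" where
  "all_to_infty = (INF B. principal {x. \<forall>i j. B \<le> x i j})"

text \<open>The matrix A(phi, Sigma^n) with infinite entries replaced by the variables x_ij.\<close>
definition Amat :: "('o, 'm, 'k::field) kcat \<Rightarrow> 'o list \<Rightarrow> nat \<Rightarrow> (nat \<Rightarrow> nat \<Rightarrow> real) \<Rightarrow> complex mat" where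
  "Amat C xs n x = mat (length xs) (length xs) (\<lambda>(i, j).
     (case hdim C (xs ! i) ((Sob C ^^ n) (xs ! j)) of
        enat k \<Rightarrow> complex_of_real (real k)
      | \<infinity> \<Rightarrow> complex_of_real (x i j)))"

definition rho :: "('o, 'm, 'k::field) kcat \<Rightarrow> 'o list \<Rightarrow> nat \<Rightarrow> ereal" where
  "rho C xs n = Liminf all_to_infty (\<lambda>x. ereal (spectral_radius (Amat C xs n x)))"

text \<open>log base n, with log_n 0 = -infinity and log_n infinity = infinity.\<close>
definition logn :: "nat \<Rightarrow> ereal \<Rightarrow> ereal" where
  "logn n r = (if r = 0 then -\<infinity> else if r = \<infinity> then \<infinity>
               else ereal (log (real n) (real_of_ereal r)))"

definition fpg :: "('o, 'm, 'k::field) kcat \<Rightarrow> ereal" where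
  "fpg C = (SUP xs \<in> {xs. atomic_set C xs}. limsup (\<lambda>n. logn n (rho C xs n)))"

definition fpc :: "('o, 'm, 'k::field) kcat \<Rightarrow> ereal" where
  "fpc C = fpg C + 1"

end

theory Submission
  imports Defs
begin

text \<open>Suppose every object lies in the subcategory of complexity below d and let
  X_1, ..., X_m be an atomic set. Then each entry dim Hom(X_i, Sigma^n X_j) of A(phi, Sigma^n)
  is eventually finite and at most n^(d-1). Hence log_n rho is at most log_n m + d - 1, whose limit superior is d - 1; so
  fpg is at most d - 1 for every such d.\<close>

lemma eigenvalue_norm_le:
  fixes A :: "complex mat"
  assumes A: "A \<in> carrier_mat n n" and ev: "eigenvalue A l" and bound: "norm_bound A c"
  shows "norm l \<le> real n * c"
proof -
  obtain v where v: "v \<in> carrier_vec n" "v \<noteq> 0\<^sub>v n" and Av: "A *\<^sub>v v = l \<cdot>\<^sub>v v"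
    using ev A unfolding eigenvalue_def eigenvector_def by auto
  obtain i where i: "i < n" and vmax: "\<And>j. j < n \<Longrightarrow> norm (v $ j) \<le> norm (v $ i)"
  proof (cases "n = 0")
    case True
    with v show ?thesis
      by (metis carrier_vecD eq_vecI index_zero_vec(2) less_nat_zero_code)
  next
    case False
    define N where "N = Max ((\<lambda>j. norm (v $ j)) ` {..<n})"
    have "N \<in> (\<lambda>j. norm (v $ j)) ` {..<n}"
      unfolding N_def using False by (intro Max_in) auto
    moreover have "norm (v $ j) \<le> N" if "j < n" for j
      unfolding N_def using that by (intro Max_ge) auto
    ultimately show ?thesis
      using that by auto
  qed
  have vi: "norm (v $ i) > 0"
  proof (rule ccontr)
    assume "\<not> norm (v $ i) > 0"
    with vmax have "v = 0\<^sub>v n"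
      using v(1) by (intro eq_vecI) (auto simp: order.antisym)
    with v(2) show False ..
  qed
  have "norm l * norm (v $ i) = norm ((A *\<^sub>v v) $ i)"
    using Av v(1) i by (simp add: norm_mult)
  also have "\<dots> = norm (\<Sum>j<n. A $$ (i, j) * v $ j)"
    using A v(1) i by (simp add: scalar_prod_def atLeast0LessThan)
  also have "\<dots> \<le> (\<Sum>j<n. norm (A $$ (i, j)) * norm (v $ j))"
    by (rule norm_sum[THEN order_trans]) (simp add: norm_mult)
  also have "\<dots> \<le> (\<Sum>j<n. c * norm (v $ i))"
  proof (rule sum_mono)
    fix j
    assume "j \<in> {..<n}"
    then have "norm (A $$ (i, j)) \<le> c" "norm (v $ j) \<le> norm (v $ i)"
      using A bound i vmax unfolding norm_bound_def by auto
    then show "norm (A $$ (i, j)) * norm (v $ j) \<le> c * norm (v $ i)"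
      by (intro mult_mono) (auto intro: order_trans[OF norm_ge_zero])
  qed
  also have "\<dots> = (real n * c) * norm (v $ i)"
    by simp
  finally show ?thesis
    using vi by (rule mult_right_le_imp_le)
qed

lemma spectral_radius_le_norm_bound:
  fixes A :: "complex mat"
  assumes A: "A \<in> carrier_mat n n" and n: "n > 0" and bound: "norm_bound A c"
  shows "spectral_radius A \<le> real n * c"
  using spectral_radius_mem_max(1)[OF A n] eigenvalue_norm_le[OF A _ bound]
  unfolding spectrum_def by auto

lemma eventually_enat_le_of_tendsto_zero:
  fixes f :: "'a \<Rightarrow> enat" and g :: "'a \<Rightarrow> real"
  assumes lim: "((\<lambda>n. ereal_of_enat (f n) / ereal (g n)) \<longlongrightarrow> 0) F"
    and pos: "eventually (\<lambda>n. g n > 0) F"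
  shows "eventually (\<lambda>n. \<exists>k. f n = enat k \<and> real k \<le> g n) F"
proof -
  have "eventually (\<lambda>n. ereal_of_enat (f n) / ereal (g n) < 1) F"
    using lim by (rule order_tendstoD) simp
  with pos show ?thesis
  proof eventually_elim
    case (elim n)
    show ?case
    proof (cases "f n")
      case (enat k)
      with elim have "real k / g n < 1"
        by simp
      with elim(1) enat show ?thesis
        by (simp add: divide_less_eq)
    next
      case infinity
      with elim show ?thesis
        by simp
    qed
  qed
qed

lemma log_base_tendsto_zero: "((\<lambda>n::nat. log (real n) x) \<longlongrightarrow> 0) sequentially"
  unfolding log_def
  by (intro tendsto_divide_0[OF tendsto_const] filterlim_at_top_imp_at_infinity
      filterlim_compose[OF ln_at_top filterlim_real_sequentially])

lemma all_to_infty_neq_bot: "all_to_infty \<noteq> bot"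
  unfolding all_to_infty_def trivial_limit_def
proof (subst eventually_INF_base)
  fix a b :: real
  show "\<exists>c\<in>UNIV. principal {x. \<forall>i j. c \<le> x i j} \<le>
      inf (principal {x. \<forall>i j. a \<le> x i j}) (principal {x. \<forall>i j. b \<le> x i j})"
    by (rule bexI[of _ "max a b"]) auto
qed (auto simp: eventually_principal)

lemma Amat_eq_if_hdim_finite:
  assumes "\<forall>i<length xs. \<forall>j<length xs. hdim C (xs ! i) ((Sob C ^^ n) (xs ! j)) \<noteq> \<infinity>"
  shows "Amat C xs n x = Amat C xs n y"
proof (rule eq_matI)
  fix i j
  assume "i < dim_row (Amat C xs n y)" "j < dim_col (Amat C xs n y)"
  with assms obtain k where "hdim C (xs ! i) ((Sob C ^^ n) (xs ! j)) = enat k"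
    unfolding Amat_def by fastforce
  then show "Amat C xs n x $$ (i, j) = Amat C xs n y $$ (i, j)"
    using \<open>i < _\<close> \<open>j < _\<close> unfolding Amat_def by simp
qed (simp_all add: Amat_def)

lemma logn_ereal: "r \<noteq> 0 \<Longrightarrow> logn n (ereal r) = ereal (log (real n) r)"
  by (simp add: logn_def)

lemma logn_rho_le_of_hdim_le:
  fixes C :: "('o, 'm, 'k::field) kcat"
  assumes xs: "xs \<noteq> []" and n: "n \<ge> 2"
    and entries: "\<forall>i<length xs. \<forall>j<length xs.
      \<exists>k. hdim C (xs ! i) ((Sob C ^^ n) (xs ! j)) = enat k \<and> real k \<le> b"
  shows "logn n (rho C xs n) \<le> ereal (log (real n) (real (length xs) * b))"
proof -
  define A where "A = Amat C xs n (\<lambda>_ _. 0)"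
  have A: "A \<in> carrier_mat (length xs) (length xs)"
    unfolding A_def Amat_def by simp
  have "Amat C xs n x = A" for x
    unfolding A_def using entries by (intro Amat_eq_if_hdim_finite) auto
  then have rho: "rho C xs n = ereal (spectral_radius A)"
    unfolding rho_def using all_to_infty_neq_bot by (simp add: Liminf_const)
  have "norm_bound A b"
  proof
    fix i j
    assume "i < dim_row A" "j < dim_col A"
    with A entries obtain k
      where "hdim C (xs ! i) ((Sob C ^^ n) (xs ! j)) = enat k" "real k \<le> b"
      by auto
    with \<open>i < dim_row A\<close> \<open>j < dim_col A\<close> A show "norm (A $$ (i, j)) \<le> b"
      unfolding A_def Amat_def by simp
  qed
  then have le: "spectral_radius A \<le> real (length xs) * b"
    using xs by (intro spectral_radius_le_norm_bound[OF A]) auto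
  have nonneg: "spectral_radius A \<ge> 0"
    using spectral_radius_mem_max(1)[OF A] xs by auto
  show ?thesis
  proof (cases "spectral_radius A = 0")
    case True
    then show ?thesis
      by (simp add: rho logn_def)
  next
    case False
    with nonneg have pos: "spectral_radius A > 0"
      by simp
    with le n have "log (real n) (spectral_radius A) \<le> log (real n) (real (length xs) * b)"
      by (intro log_mono) auto
    moreover have "logn n (rho C xs n) = ereal (log (real n) (spectral_radius A))"
      unfolding rho by (rule logn_ereal[OF False])
    ultimately show ?thesis
      by simp
  qed
qed

lemma limsup_logn_rho_le:
  fixes C :: "('o, 'm, 'k::field) kcat"
  assumes xs: "xs \<noteq> []" "set xs \<subseteq> Ob C" and dT: "\<forall>X\<in>set xs. in_dT C d X"
  shows "limsup (\<lambda>n. logn n (rho C xs n)) \<le> ereal (d - 1)"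
proof -
  let ?m = "length xs"
  let ?P = "\<lambda>n i j. \<exists>k. hdim C (xs ! i) ((Sob C ^^ n) (xs ! j)) = enat k \<and>
    real k \<le> real n powr (d - 1)"
  have pos: "eventually (\<lambda>n::nat. real n powr (d - 1) > 0) sequentially"
    using eventually_gt_at_top[of 0] by eventually_elim simp
  have "eventually (\<lambda>n. ?P n i j) sequentially" if "i < ?m" "j < ?m" for i j
  proof -
    have "xs ! i \<in> set xs" "xs ! j \<in> Ob C"
      using that xs(2) by auto
    with dT have "((\<lambda>n. ereal_of_enat (hdim C (xs ! i) ((Sob C ^^ n) (xs ! j))) /
        ereal (real n powr (d - 1))) \<longlongrightarrow> 0) sequentially"
      unfolding in_dT_def by blast
    then show ?thesis
      using pos by (rule eventually_enat_le_of_tendsto_zero)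
  qed
  then have "eventually (\<lambda>n. \<forall>i\<in>{..<?m}. \<forall>j\<in>{..<?m}. ?P n i j) sequentially"
    by (intro eventually_ball_finite ballI) auto
  then have bound:
    "eventually (\<lambda>n. logn n (rho C xs n) \<le> ereal (log (real n) ?m + (d - 1))) sequentially"
    using eventually_ge_at_top[of 2]
  proof eventually_elim
    case (elim n)
    then have "logn n (rho C xs n) \<le> ereal (log (real n) (?m * real n powr (d - 1)))"
      using xs(1) by (intro logn_rho_le_of_hdim_le) auto
    also have "\<dots> = ereal (log (real n) ?m + (d - 1))"
      using elim(2) xs(1) by (simp add: log_mult log_powr)
    finally show ?case .
  qed
  have "((\<lambda>n. ereal (log (real n) ?m + (d - 1))) \<longlongrightarrow> ereal (0 + (d - 1))) sequentially"
    by (intro tendsto_intros log_base_tendsto_zero)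
  then have "limsup (\<lambda>n. ereal (log (real n) ?m + (d - 1))) = ereal (d - 1)"
    by (simp add: lim_imp_Limsup)
  with Limsup_mono[OF bound] show ?thesis
    by simp
qed

theorem theorem8p3:
  fixes C :: "('o, 'm, 'k::field) kcat"
  assumes "alg_closed TYPE('k)"
    and "pretriangulated C"
  shows "fpc C \<le> cx C"
  unfolding fpc_def cx_def
proof (rule Inf_greatest)
  fix e
  assume "e \<in> {ereal d |d. \<forall>X\<in>Ob C. in_dT C d X}"
  then obtain d where e: "e = ereal d" and dT: "\<forall>X\<in>Ob C. in_dT C d X"
    by auto
  have "limsup (\<lambda>n. logn n (rho C xs n)) \<le> ereal (d - 1)" if "atomic_set C xs" for xs
    using that dT by (intro limsup_logn_rho_le) (auto simp: atomic_set_def atomic_def)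
  then have "fpg C \<le> ereal (d - 1)"
    unfolding fpg_def by (intro SUP_least) auto
  then have "fpg C + 1 \<le> ereal (d - 1) + 1"
    by (rule add_right_mono)
  then show "fpg C + 1 \<le> e"
    using e by simp
qed

end
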